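(* Let $B$ be the open unit ball of $\ell_1$ (complex scalars). For each $x$ in the unit sphere $S_{\ell_1}$, both the cluster value theorem and the polynomial cluster value theorem hold for $A_\infty(B)$ at $x$, i.e. $Cl_B(f,x)=\hat f(M_x)$ and $Cl_B^{\mathcal P}(f,x)=\hat f(M^{\mathcal P}_x)$ for all $f\in A_\infty(B)$.
   Context: $A_\infty(B)$: bounded holomorphic functions on $B$ extending continuously to $\bar B$, with sup norm; $M_{A_\infty(B)}$ its spectrum, $\hat f$ the Gelfand transform; $A_u(B)$: uniformly continuous holomorphic functions on $B$; $P(X)$ continuous polynomials, $\tilde P,\tilde g$ Aron–Berner extensions to $X^{**}$. $Cl_B(f,x)=\{\lambda:\exists\text{ net }(x_\alpha)\subset B,\ x_\alpha\to x\text{ weak-star in }X^{**},\ f(x_\alpha)\to\lambda\}$; $M_x=\{\tau:\tau(L)=L(x)\ \forall L\in X^*\}$; $Cl_B^{\mathcal P}(f,x)=\{\lambda:\exists\text{ net }(x_\alpha)\subset B,\ P(x_\alpha)\to\tilde P(x)\ \forall P\in P(X),\ f(x_\alpha)\to\lambda\}$; $M^{\mathcal P}_x=\{\tau:\tau(g)=\tilde g(x)\ \forall g\in A_u(B)\}$. *)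

theory Defs
  imports "HOL-Analysis.Analysis" "HOL-Library.Function_Algebras"
begin

type_synonym l1 = "nat \<Rightarrow> complex"

definition l1_space :: "l1 set" where
  "l1_space = {x. summable (\<lambda>n. norm (x n))}"

definition l1norm :: "l1 \<Rightarrow> real" where
  "l1norm x = (\<Sum>n. norm (x n))"

definition scl :: "complex \<Rightarrow> l1 \<Rightarrow> l1" where
  "scl c x = (\<lambda>n. c * x n)"

definition l1_ball :: "l1 set" where
  "l1_ball = {x \<in> l1_space. l1norm x < 1}"

definition l1_cball :: "l1 set" where
  "l1_cball = {x \<in> l1_space. l1norm x \<le> 1}"

definition l1_sphere :: "l1 set" where
  "l1_sphere = {x \<in> l1_space. l1norm x = 1}"

definition l1_dual :: "(l1 \<Rightarrow> complex) set" where
  "l1_dual = {L. (\<forall>x\<in>l1_space. \<forall>y\<in>l1_space. L (x + y) = L x + L y)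
               \<and> (\<forall>c. \<forall>x\<in>l1_space. L (scl c x) = c * L x)
               \<and> (\<exists>C. \<forall>x\<in>l1_space. norm (L x) \<le> C * l1norm x)}"

definition holo_on_ball :: "(l1 \<Rightarrow> complex) \<Rightarrow> bool" where
  "holo_on_ball f \<longleftrightarrow> (\<forall>a\<in>l1_ball. \<exists>D\<in>l1_dual. \<forall>e>0. \<exists>d>0. \<forall>h\<in>l1_space.
      l1norm h < d \<longrightarrow> norm (f (a + h) - f a - D h) \<le> e * l1norm h)"

definition cont_on_l1 :: "l1 set \<Rightarrow> (l1 \<Rightarrow> complex) \<Rightarrow> bool" where
  "cont_on_l1 S f \<longleftrightarrow> (\<forall>a\<in>S. \<forall>e>0. \<exists>d>0. \<forall>y\<in>S. l1norm (y - a) < d \<longrightarrow> norm (f y - f a) < e)"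

definition unif_cont_on_l1 :: "l1 set \<Rightarrow> (l1 \<Rightarrow> complex) \<Rightarrow> bool" where
  "unif_cont_on_l1 S f \<longleftrightarrow> (\<forall>e>0. \<exists>d>0. \<forall>a\<in>S. \<forall>y\<in>S. l1norm (y - a) < d \<longrightarrow> norm (f y - f a) < e)"

text \<open>A_infty(B): elements are represented canonically by their continuous extension
  to the closed ball, set to 0 outside the closed ball.\<close>
definition A_inf :: "(l1 \<Rightarrow> complex) set" where
  "A_inf = {f. holo_on_ball f \<and> cont_on_l1 l1_cball f \<and> (\<exists>C. \<forall>y\<in>l1_ball. norm (f y) \<le> C)
              \<and> (\<forall>y. y \<notin> l1_cball \<longrightarrow> f y = 0)}"

definition A_inf_one :: "l1 \<Rightarrow> complex" where
  "A_inf_one = (\<lambda>y. if y \<in> l1_cball then 1 else 0)"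

definition spectrum_A_inf :: "((l1 \<Rightarrow> complex) \<Rightarrow> complex) set" where
  "spectrum_A_inf = {\<tau>. (\<forall>f\<in>A_inf. \<forall>g\<in>A_inf. \<tau> (\<lambda>y. f y + g y) = \<tau> f + \<tau> g)
      \<and> (\<forall>c. \<forall>f\<in>A_inf. \<tau> (\<lambda>y. c * f y) = c * \<tau> f)
      \<and> (\<forall>f\<in>A_inf. \<forall>g\<in>A_inf. \<tau> (\<lambda>y. f y * g y) = \<tau> f * \<tau> g)
      \<and> (\<exists>f\<in>A_inf. \<tau> f \<noteq> 0)}"

definition gelfand :: "(l1 \<Rightarrow> complex) \<Rightarrow> ((l1 \<Rightarrow> complex) \<Rightarrow> complex) \<Rightarrow> complex" where
  "gelfand f \<tau> = \<tau> f"

text \<open>Fiber M_x, for x in the closed ball of X (viewed in X** canonically).\<close>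
definition fiber :: "l1 \<Rightarrow> ((l1 \<Rightarrow> complex) \<Rightarrow> complex) set" where
  "fiber x = {\<tau> \<in> spectrum_A_inf. \<forall>L\<in>l1_dual. \<tau> (\<lambda>y. if y \<in> l1_cball then L y else 0) = L x}"

text \<open>Cluster set: nets in B are represented by proper filters on l_1 eventually in B;
  weak-star convergence in X** to x in X is convergence under every L in X*.\<close>
definition cluster_set :: "(l1 \<Rightarrow> complex) \<Rightarrow> l1 \<Rightarrow> complex set" where
  "cluster_set f x = {v. \<exists>F. F \<noteq> bot \<and> eventually (\<lambda>y. y \<in> l1_ball) F
      \<and> (\<forall>L\<in>l1_dual. (L \<longlongrightarrow> L x) F) \<and> (f \<longlongrightarrow> v) F}"

definition multilin_l1 :: "nat \<Rightarrow> (l1 list \<Rightarrow> complex) \<Rightarrow> bool" where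
  "multilin_l1 k A \<longleftrightarrow>
     (\<forall>xs i y z c. length xs = k \<and> i < k \<and> set xs \<subseteq> l1_space \<and> y \<in> l1_space \<and> z \<in> l1_space \<longrightarrow>
        A (xs[i := y + z]) = A (xs[i := y]) + A (xs[i := z])
      \<and> A (xs[i := scl c y]) = c * A (xs[i := y]))
   \<and> (\<exists>C. \<forall>xs. length xs = k \<and> set xs \<subseteq> l1_space \<longrightarrow> norm (A xs) \<le> C * (\<Prod>v\<leftarrow>xs. l1norm v))"

definition poly_l1 :: "(l1 \<Rightarrow> complex) set" where
  "poly_l1 = {P. \<exists>N As. (\<forall>k\<le>N. multilin_l1 k (As k))
                   \<and> (\<forall>x\<in>l1_space. P x = (\<Sum>k\<le>N. As k (replicate k x)))}"

definition A_u :: "(l1 \<Rightarrow> complex) set" where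
  "A_u = {g. holo_on_ball g \<and> unif_cont_on_l1 l1_ball g}"

definition uc_ext :: "(l1 \<Rightarrow> complex) \<Rightarrow> l1 \<Rightarrow> complex" where
  "uc_ext g x = (THE v. \<forall>e>0. \<exists>d>0. \<forall>y\<in>l1_ball. l1norm (y - x) < d \<longrightarrow> norm (g y - v) < e)"

definition A_u_rep :: "(l1 \<Rightarrow> complex) \<Rightarrow> (l1 \<Rightarrow> complex)" where
  "A_u_rep g = (\<lambda>y. if y \<in> l1_cball then uc_ext g y else 0)"

definition fiber_P :: "l1 \<Rightarrow> ((l1 \<Rightarrow> complex) \<Rightarrow> complex) set" where
  "fiber_P x = {\<tau> \<in> spectrum_A_inf. \<forall>g\<in>A_u. \<tau> (A_u_rep g) = uc_ext g x}"

definition cluster_set_P :: "(l1 \<Rightarrow> complex) \<Rightarrow> l1 \<Rightarrow> complex set" where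
  "cluster_set_P f x = {v. \<exists>F. F \<noteq> bot \<and> eventually (\<lambda>y. y \<in> l1_ball) F
      \<and> (\<forall>P\<in>poly_l1. (P \<longlongrightarrow> P x) F) \<and> (f \<longlongrightarrow> v) F}"

end

theory Submission
  imports Defs "HOL-Library.Landau_Symbols"
begin

text \<open>At a point \<open>x\<close> of the unit sphere of \<open>\<ell>\<^sub>1\<close> both cluster sets and both images of
  fibres reduce to \<open>{f(x)}\<close>.

  Cluster sets: on the closed unit ball, convergence of finitely many coordinates to those of
  \<open>x\<close> already forces norm convergence to \<open>x\<close>, since \<open>\<parallel>y\<parallel> \<le> 1 = \<parallel>x\<parallel>\<close> and almost all of the
  mass of \<open>x\<close> sits on finitely many coordinates. Coordinates are continuous linear functionals
  and polynomials, so every net defining either cluster set converges to \<open>x\<close> in norm, while the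
  radial approach \<open>t x\<close>, \<open>t \<rightarrow> 1\<^sup>-\<close>, attains \<open>f(x)\<close>.

  Fibres: for a finite set \<open>I\<close> of coordinates, the polynomial
  \<open>Q(y) = (2|I| + 1) (1 - \<Sum>\<^sub>n sgn x\<^sub>n* y\<^sub>n) + \<Sum>\<^sub>n\<^sub>\<in>\<^sub>I (sgn x\<^sub>n* y\<^sub>n - \<bar>x\<^sub>n\<bar>)\<^sup>2\<close>
  in continuous linear functionals vanishes at \<open>x\<close>, has nonnegative real part on the closed ball,
  and real part bounded below away from \<open>x\<close> when \<open>I\<close> carries most of the mass of \<open>x\<close>.
  Every character \<open>\<tau>\<close> over \<open>x\<close> sends \<open>h = 1/(1 + Q)\<close> to \<open>1\<close>, and since characters are bounded
  by the supremum norm, \<open>\<tau>(g) = \<tau>(g h\<^sup>k)\<close> only depends on \<open>g\<close> near \<open>x\<close>; hence \<open>\<tau>(f) = f(x)\<close>.\<close>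

lemma l1_spaceD: "x \<in> l1_space \<Longrightarrow> summable (\<lambda>n. norm (x n))"
  by (simp add: l1_space_def)

lemma l1norm_nonneg: "x \<in> l1_space \<Longrightarrow> 0 \<le> l1norm x"
  unfolding l1norm_def by (simp add: l1_spaceD suminf_nonneg)

lemma l1norm_zero [simp]: "l1norm 0 = 0"
  by (simp add: l1norm_def)

lemma l1_space_add: "x \<in> l1_space \<Longrightarrow> y \<in> l1_space \<Longrightarrow> x + y \<in> l1_space"
  unfolding l1_space_def mem_Collect_eq
  by (rule summable_comparison_test'[where N = 0 and g = "\<lambda>n. norm (x n) + norm (y n)"])
    (auto intro: summable_add norm_triangle_ineq)

lemma l1_space_uminus: "x \<in> l1_space \<Longrightarrow> - x \<in> l1_space"
  by (simp add: l1_space_def)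

lemma l1_space_scl: "x \<in> l1_space \<Longrightarrow> scl c x \<in> l1_space"
  unfolding l1_space_def scl_def by (simp add: norm_mult summable_mult)

lemma l1_space_diff: "x \<in> l1_space \<Longrightarrow> y \<in> l1_space \<Longrightarrow> x - y \<in> l1_space"
  using l1_space_add[of x "- y"] l1_space_uminus[of y] by (simp only: diff_conv_add_uminus)

lemma l1norm_triangle: "x \<in> l1_space \<Longrightarrow> y \<in> l1_space \<Longrightarrow> l1norm (x + y) \<le> l1norm x + l1norm y"
proof -
  assume xy: "x \<in> l1_space" "y \<in> l1_space"
  have "(\<Sum>n. norm (x n + y n)) \<le> (\<Sum>n. norm (x n) + norm (y n))"
    using l1_spaceD[OF l1_space_add[OF xy]] l1_spaceD[OF xy(1)] l1_spaceD[OF xy(2)]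
    by (intro suminf_le summable_add) (auto simp: norm_triangle_ineq)
  also have "\<dots> = l1norm x + l1norm y"
    using xy unfolding l1norm_def by (intro suminf_add[symmetric]) (auto simp: l1_spaceD)
  finally show ?thesis by (simp add: l1norm_def)
qed

lemma l1norm_scl: "x \<in> l1_space \<Longrightarrow> l1norm (scl c x) = norm c * l1norm x"
  unfolding l1norm_def scl_def by (simp add: norm_mult suminf_mult l1_spaceD)

lemma norm_le_l1norm: "x \<in> l1_space \<Longrightarrow> norm (x n) \<le> l1norm x"
  unfolding l1norm_def using sum_le_suminf[of "\<lambda>n. norm (x n)" "{n}"] by (simp add: l1_spaceD)

lemma l1_ball_subset_cball: "l1_ball \<subseteq> l1_cball"
  unfolding l1_ball_def l1_cball_def by auto

lemma l1_sphere_subset_cball: "l1_sphere \<subseteq> l1_cball"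
  unfolding l1_sphere_def l1_cball_def by auto

lemma l1_cballD: "y \<in> l1_cball \<Longrightarrow> y \<in> l1_space \<and> l1norm y \<le> 1"
  by (simp add: l1_cball_def)

lemma l1_ballD: "y \<in> l1_ball \<Longrightarrow> y \<in> l1_space \<and> l1norm y < 1"
  by (simp add: l1_ball_def)

lemma l1_sphereD: "x \<in> l1_sphere \<Longrightarrow> x \<in> l1_space \<and> l1norm x = 1"
  by (simp add: l1_sphere_def)

lemma l1_ball_add:
  assumes "a \<in> l1_ball" "h \<in> l1_space" "l1norm h < 1 - l1norm a"
  shows "a + h \<in> l1_ball"
  using assms l1norm_triangle[of a h] unfolding l1_ball_def by (simp add: l1_space_add)

lemma radial_in_ball:
  assumes "y \<in> l1_cball" "0 \<le> t" "t < 1"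
  shows "scl (of_real t) y \<in> l1_ball"
proof -
  have "l1norm (scl (of_real t) y) = t * l1norm y"
    using assms l1norm_scl[of y] by (simp add: l1_cball_def)
  also have "\<dots> \<le> t"
    using assms by (simp add: l1_cball_def mult_left_le)
  finally show ?thesis using assms by (simp add: l1_ball_def l1_cball_def l1_space_scl)
qed

lemma radial_dist:
  assumes "y \<in> l1_space"
  shows "l1norm (scl (of_real t) y - y) = \<bar>1 - t\<bar> * l1norm y"
proof -
  have "scl (of_real t) y - y = scl (of_real (t - 1)) y"
    by (auto simp: scl_def algebra_simps)
  then show ?thesis using l1norm_scl[OF assms, of "of_real (t - 1)"]
    by (simp only: norm_of_real abs_minus_commute)
qed

lemma l1_cball_approx_by_ball:
  assumes "y \<in> l1_cball" "d > 0"
  shows "\<exists>z\<in>l1_ball. l1norm (z - y) < d"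
proof -
  define t where "t = max (1/2) (1 - d/2)"
  have t: "0 \<le> t" "t < 1" using assms(2) by (auto simp: t_def)
  have "\<bar>1 - t\<bar> * l1norm y \<le> \<bar>1 - t\<bar>"
    using assms(1) by (auto simp: l1_cball_def intro: mult_left_le)
  also have "\<dots> < d" using assms(2) by (simp add: t_def)
  finally show ?thesis
    using radial_in_ball[OF assms(1) t] radial_dist[of y t] assms(1)
    by (intro bexI[of _ "scl (of_real t) y"]) (auto simp: l1_cball_def)
qed

definition l1_within :: "l1 \<Rightarrow> l1 set \<Rightarrow> l1 filter" where
  "l1_within a S = (INF d\<in>{0<..}. principal {y \<in> S. l1norm (y - a) < d})"

lemma eventually_l1_within:
  "eventually P (l1_within a S) \<longleftrightarrow> (\<exists>d>0. \<forall>y\<in>S. l1norm (y - a) < d \<longrightarrow> P y)"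
proof -
  have "\<exists>d''\<in>{0<..}. principal {y \<in> S. l1norm (y - a) < d''}
          \<le> inf (principal {y \<in> S. l1norm (y - a) < d}) (principal {y \<in> S. l1norm (y - a) < d'})"
    if "d \<in> {0<..}" "d' \<in> {0<..}" for d d' :: real
    using that by (intro bexI[of _ "min d d'"]) auto
  then have "eventually P (l1_within a S) \<longleftrightarrow>
      (\<exists>d\<in>{0<..}. eventually P (principal {y \<in> S. l1norm (y - a) < d}))"
    unfolding l1_within_def by (intro eventually_INF_base) auto
  then show ?thesis by (auto simp: eventually_principal)
qed

lemma cont_on_l1_iff_tendsto: "cont_on_l1 S f \<longleftrightarrow> (\<forall>a\<in>S. (f \<longlongrightarrow> f a) (l1_within a S))"
  unfolding cont_on_l1_def tendsto_iff eventually_l1_within dist_norm by (rule refl)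

abbreviation l1_nhds0 :: "l1 filter" where
  "l1_nhds0 \<equiv> l1_within 0 l1_space"

text \<open>Landau symbols compare functions with a common codomain, hence the complex-valued norm.\<close>

abbreviation l1normC :: "l1 \<Rightarrow> complex" where
  "l1normC h \<equiv> of_real (l1norm h)"

lemma eventually_l1_nhds0: "eventually P l1_nhds0 \<longleftrightarrow> (\<exists>d>0. \<forall>h\<in>l1_space. l1norm h < d \<longrightarrow> P h)"
  by (simp add: eventually_l1_within)

lemma smallo_l1normC_iff:
  "R \<in> o[l1_nhds0](l1normC) \<longleftrightarrow>
     (\<forall>e>0. \<exists>d>0. \<forall>h\<in>l1_space. l1norm h < d \<longrightarrow> norm (R h) \<le> e * l1norm h)"
  by (simp add: smallo_def eventually_l1_nhds0 l1norm_nonneg)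

lemma l1normC_smallo_1: "l1normC \<in> o[l1_nhds0](\<lambda>_. 1)"
proof (rule landau_o.smallI)
  fix c :: real assume "c > 0"
  then show "eventually (\<lambda>h. norm (l1normC h) \<le> c * norm (1::complex)) l1_nhds0"
    by (auto simp: eventually_l1_nhds0 l1norm_nonneg intro!: exI[of _ c])
qed

lemma const_bigo_1: "(\<lambda>_. c) \<in> O[F](\<lambda>_. 1)"
  by (rule bigoI[of _ "norm c"]) simp

lemma l1_dual_bigo: "L \<in> l1_dual \<Longrightarrow> L \<in> O[l1_nhds0](l1normC)"
proof -
  assume "L \<in> l1_dual"
  then obtain C where "\<forall>x\<in>l1_space. norm (L x) \<le> C * l1norm x"
    unfolding l1_dual_def by blast
  then show ?thesis
    by (intro bigoI[of _ C]) (auto simp: eventually_l1_nhds0 l1norm_nonneg intro!: exI[of _ 1])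
qed

lemma l1_dual_add: "D \<in> l1_dual \<Longrightarrow> x \<in> l1_space \<Longrightarrow> y \<in> l1_space \<Longrightarrow> D (x + y) = D x + D y"
  unfolding l1_dual_def by blast

lemma l1_dual_scl: "D \<in> l1_dual \<Longrightarrow> x \<in> l1_space \<Longrightarrow> D (scl c x) = c * D x"
  unfolding l1_dual_def by blast

lemma l1_dual_bound:
  assumes "D \<in> l1_dual"
  shows "\<exists>C\<ge>0. \<forall>x\<in>l1_space. norm (D x) \<le> C * l1norm x"
proof -
  obtain C where C: "\<forall>x\<in>l1_space. norm (D x) \<le> C * l1norm x"
    using assms unfolding l1_dual_def by blast
  have "C * l1norm x \<le> \<bar>C\<bar> * l1norm x" if "x \<in> l1_space" for x
    using l1norm_nonneg[OF that] by (intro mult_right_mono) auto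
  with C show ?thesis by (intro exI[of _ "\<bar>C\<bar>"]) (auto intro: order_trans)
qed

lemma l1_dual_diff: "D \<in> l1_dual \<Longrightarrow> x \<in> l1_space \<Longrightarrow> y \<in> l1_space \<Longrightarrow> D (x - y) = D x - D y"
  using l1_dual_add[of D "x - y" y] l1_space_diff[of x y] by simp

lemma l1_dual_zero: "(\<lambda>h. 0) \<in> l1_dual"
  unfolding l1_dual_def by (auto intro: exI[of _ 0])

lemma l1_dual_lincomb:
  assumes "D \<in> l1_dual" "E \<in> l1_dual"
  shows "(\<lambda>h. a * D h + b * E h) \<in> l1_dual"
proof -
  obtain C1 C2 where C: "\<forall>x\<in>l1_space. norm (D x) \<le> C1 * l1norm x" "\<forall>x\<in>l1_space. norm (E x) \<le> C2 * l1norm x"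
    using l1_dual_bound[OF assms(1)] l1_dual_bound[OF assms(2)] by blast
  have "norm (a * D x + b * E x) \<le> (norm a * C1 + norm b * C2) * l1norm x" if "x \<in> l1_space" for x
  proof -
    have "norm (a * D x + b * E x) \<le> norm a * norm (D x) + norm b * norm (E x)"
      by (metis norm_mult norm_triangle_ineq)
    also have "\<dots> \<le> norm a * (C1 * l1norm x) + norm b * (C2 * l1norm x)"
      using C that by (intro add_mono mult_left_mono) auto
    finally show ?thesis by (simp add: algebra_simps)
  qed
  then show ?thesis
    using l1_dual_add[OF assms(1)] l1_dual_add[OF assms(2)] l1_dual_scl[OF assms(1)] l1_dual_scl[OF assms(2)]
    unfolding l1_dual_def by (auto simp: algebra_simps intro!: exI[of _ "norm a * C1 + norm b * C2"])
qed

lemma l1_dual_cmult: "D \<in> l1_dual \<Longrightarrow> (\<lambda>h. c * D h) \<in> l1_dual"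
  using l1_dual_lincomb[of D D c 0] by simp

definition holo_at :: "(l1 \<Rightarrow> complex) \<Rightarrow> l1 \<Rightarrow> bool" where
  "holo_at F a \<longleftrightarrow> (\<exists>D\<in>l1_dual. (\<lambda>h. F (a + h) - F a - D h) \<in> o[l1_nhds0](l1normC))"

lemma holo_on_ball_iff: "holo_on_ball F \<longleftrightarrow> (\<forall>a\<in>l1_ball. holo_at F a)"
  unfolding holo_on_ball_def holo_at_def smallo_l1normC_iff ..

lemma holo_at_increment_bigo:
  assumes "holo_at F a"
  shows "(\<lambda>h. F (a + h) - F a) \<in> O[l1_nhds0](l1normC)"
proof -
  obtain D where D: "D \<in> l1_dual" "(\<lambda>h. F (a + h) - F a - D h) \<in> o[l1_nhds0](l1normC)"
    using assms unfolding holo_at_def by blast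
  have "(\<lambda>h. (F (a + h) - F a - D h) + D h) \<in> O[l1_nhds0](l1normC)"
    using D by (intro sum_in_bigo landau_o.small_imp_big l1_dual_bigo)
  then show ?thesis by simp
qed

lemma holo_at_increment_smallo_1: "holo_at F a \<Longrightarrow> (\<lambda>h. F (a + h) - F a) \<in> o[l1_nhds0](\<lambda>_. 1)"
  by (rule landau_o.big_small_trans[OF holo_at_increment_bigo l1normC_smallo_1])

lemma holo_at_bigo_1:
  assumes "holo_at F a"
  shows "(\<lambda>h. F (a + h)) \<in> O[l1_nhds0](\<lambda>_. 1)"
proof -
  have "(\<lambda>h. F a + (F (a + h) - F a)) \<in> O[l1_nhds0](\<lambda>_. 1)"
    using holo_at_increment_smallo_1[OF assms]
    by (intro sum_in_bigo const_bigo_1 landau_o.small_imp_big)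
  then show ?thesis by simp
qed

lemma holo_at_tendsto:
  assumes "holo_at F a"
  shows "((\<lambda>h. F (a + h)) \<longlongrightarrow> F a) l1_nhds0"
proof -
  have "((\<lambda>h. F a + (F (a + h) - F a) / 1) \<longlongrightarrow> F a + 0) l1_nhds0"
    by (intro tendsto_add tendsto_const smalloD_tendsto holo_at_increment_smallo_1 assms)
  then show ?thesis by simp
qed

lemma holo_at_const: "holo_at (\<lambda>y. c) a"
  unfolding holo_at_def by (intro bexI[OF _ l1_dual_zero]) simp

lemma holo_at_dual:
  assumes "L \<in> l1_dual" "a \<in> l1_space"
  shows "holo_at L a"
proof -
  have "eventually (\<lambda>h. L (a + h) - L a - L h = 0) l1_nhds0"
    using assms unfolding l1_dual_def eventually_l1_nhds0 by (intro exI[of _ 1]) auto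
  then have "(\<lambda>h. L (a + h) - L a - L h) \<in> o[l1_nhds0](l1normC)"
    by (rule landau_o.small.in_cong[THEN iffD2]) simp
  with assms show ?thesis unfolding holo_at_def by blast
qed

lemma holo_at_add:
  assumes "holo_at F a" "holo_at G a"
  shows "holo_at (\<lambda>y. F y + G y) a"
proof -
  obtain D E where D: "D \<in> l1_dual" "(\<lambda>h. F (a + h) - F a - D h) \<in> o[l1_nhds0](l1normC)"
    and E: "E \<in> l1_dual" "(\<lambda>h. G (a + h) - G a - E h) \<in> o[l1_nhds0](l1normC)"
    using assms unfolding holo_at_def by blast
  have "(\<lambda>h. (F (a + h) - F a - D h) + (G (a + h) - G a - E h)) \<in> o[l1_nhds0](l1normC)"
    using D(2) E(2) by (rule sum_in_smallo(1))
  moreover have "(\<lambda>h. 1 * D h + 1 * E h) \<in> l1_dual"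
    using D E by (intro l1_dual_lincomb)
  ultimately show ?thesis
    unfolding holo_at_def by (intro bexI[of _ "\<lambda>h. 1 * D h + 1 * E h"]) (simp_all add: algebra_simps)
qed

text \<open>The product rule: the remainder splits as
  \<open>r\<^sub>F(h) G(a+h) + D(h) (G(a+h) - G(a)) + F(a) r\<^sub>G(h)\<close>.\<close>

lemma holo_at_mult:
  assumes "holo_at F a" "holo_at G a"
  shows "holo_at (\<lambda>y. F y * G y) a"
proof -
  obtain D E where D: "D \<in> l1_dual" "(\<lambda>h. F (a + h) - F a - D h) \<in> o[l1_nhds0](l1normC)"
    and E: "E \<in> l1_dual" "(\<lambda>h. G (a + h) - G a - E h) \<in> o[l1_nhds0](l1normC)"
    using assms unfolding holo_at_def by blast
  have "(\<lambda>h. (F (a + h) - F a - D h) * G (a + h)) \<in> o[l1_nhds0](l1normC)"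
    using landau_o.small_big_mult[OF D(2) holo_at_bigo_1[OF assms(2)]] by simp
  moreover have "(\<lambda>h. D h * (G (a + h) - G a)) \<in> o[l1_nhds0](l1normC)"
    using landau_o.big_small_mult[OF l1_dual_bigo[OF D(1)] holo_at_increment_smallo_1[OF assms(2)]]
    by simp
  moreover have "(\<lambda>h. F a * (G (a + h) - G a - E h)) \<in> o[l1_nhds0](l1normC)"
    using landau_o.big_small_mult[OF const_bigo_1 E(2)] by simp
  ultimately have "(\<lambda>h. (F (a + h) - F a - D h) * G (a + h) + D h * (G (a + h) - G a)
      + F a * (G (a + h) - G a - E h)) \<in> o[l1_nhds0](l1normC)"
    by (intro sum_in_smallo(1))
  moreover have "(\<lambda>h. F a * E h + G a * D h) \<in> l1_dual"
    using D E by (intro l1_dual_lincomb)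
  ultimately show ?thesis
    unfolding holo_at_def by (intro bexI[of _ "\<lambda>h. F a * E h + G a * D h"]) (simp_all add: algebra_simps)
qed

lemma reciprocal_remainder_identity:
  fixes u v d :: complex
  assumes "u \<noteq> 0" "v \<noteq> 0"
  shows "(u - v) * (u - v) * (1 / (u * v ^ 2)) - (u - v - d) / v ^ 2 = 1 / u - 1 / v - (- 1 / v ^ 2) * d"
  using assms by (simp add: field_simps power2_eq_square)

lemma holo_at_inverse:
  assumes "holo_at F a" "F a \<noteq> 0"
  shows "holo_at (\<lambda>y. 1 / F y) a"
proof -
  obtain D where D: "D \<in> l1_dual" "(\<lambda>h. F (a + h) - F a - D h) \<in> o[l1_nhds0](l1normC)"
    using assms unfolding holo_at_def by blast
  have lim: "((\<lambda>h. F (a + h)) \<longlongrightarrow> F a) l1_nhds0"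
    by (rule holo_at_tendsto[OF assms(1)])
  have nonzero: "eventually (\<lambda>h. F (a + h) \<noteq> 0) l1_nhds0"
    by (rule tendsto_imp_eventually_ne[OF lim assms(2)])
  have "((\<lambda>h. 1 / (F (a + h) * F a ^ 2)) \<longlongrightarrow> 1 / (F a * F a ^ 2)) l1_nhds0"
    using assms(2) by (intro tendsto_divide tendsto_mult lim tendsto_const) simp
  then have inv_bigo: "(\<lambda>h. 1 / (F (a + h) * F a ^ 2)) \<in> O[l1_nhds0](\<lambda>_. 1)"
    by (intro bigoI_tendsto[where c = "1 / (F a * F a ^ 2)"]) simp_all
  then have "(\<lambda>h. ((F (a + h) - F a) * (F (a + h) - F a)) * (1 / (F (a + h) * F a ^ 2)))
      \<in> o[l1_nhds0](l1normC)"
    using landau_o.small_big_mult[OF landau_o.big_small_mult[OF holo_at_increment_bigo[OF assms(1)]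
          holo_at_increment_smallo_1[OF assms(1)]] inv_bigo] by simp
  moreover have "(\<lambda>h. (F (a + h) - F a - D h) / F a ^ 2) \<in> o[l1_nhds0](l1normC)"
    using D(2) assms(2) by simp
  ultimately have "(\<lambda>h. ((F (a + h) - F a) * (F (a + h) - F a)) * (1 / (F (a + h) * F a ^ 2))
      - (F (a + h) - F a - D h) / F a ^ 2) \<in> o[l1_nhds0](l1normC)"
    by (rule sum_in_smallo(2))
  also have "?this \<longleftrightarrow>
      (\<lambda>h. 1 / F (a + h) - 1 / F a - (- 1 / F a ^ 2) * D h) \<in> o[l1_nhds0](l1normC)"
    using nonzero by (intro landau_o.small.in_cong, elim eventually_mono)
      (rule reciprocal_remainder_identity[OF _ assms(2)])
  finally show ?thesis
    unfolding holo_at_def by (intro bexI[OF _ l1_dual_cmult[OF D(1)]])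
qed

lemma holo_at_transfer:
  assumes "holo_at F a" "a \<in> l1_ball" "\<And>y. y \<in> l1_ball \<Longrightarrow> G y = F y"
  shows "holo_at G a"
proof -
  obtain D where D: "D \<in> l1_dual" "(\<lambda>h. F (a + h) - F a - D h) \<in> o[l1_nhds0](l1normC)"
    using assms(1) unfolding holo_at_def by blast
  have "eventually (\<lambda>h. G (a + h) - G a - D h = F (a + h) - F a - D h) l1_nhds0"
    using assms(2,3) l1_ball_add[OF assms(2)] l1_ballD[OF assms(2)]
    unfolding eventually_l1_nhds0 by (intro exI[of _ "1 - l1norm a"]) auto
  from landau_o.small.in_cong[OF this] D show ?thesis
    unfolding holo_at_def by blast
qed

lemma cont_on_l1_const: "cont_on_l1 S (\<lambda>y. c)"
  by (simp add: cont_on_l1_iff_tendsto)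

lemma cont_on_l1_add: "cont_on_l1 S F \<Longrightarrow> cont_on_l1 S G \<Longrightarrow> cont_on_l1 S (\<lambda>y. F y + G y)"
  by (simp add: cont_on_l1_iff_tendsto tendsto_add)

lemma cont_on_l1_mult: "cont_on_l1 S F \<Longrightarrow> cont_on_l1 S G \<Longrightarrow> cont_on_l1 S (\<lambda>y. F y * G y)"
  by (simp add: cont_on_l1_iff_tendsto tendsto_mult)

lemma cont_on_l1_inverse: "cont_on_l1 S F \<Longrightarrow> (\<And>y. y \<in> S \<Longrightarrow> F y \<noteq> 0) \<Longrightarrow> cont_on_l1 S (\<lambda>y. 1 / F y)"
  by (simp add: cont_on_l1_iff_tendsto tendsto_divide)

lemma unif_cont_imp_cont_on_l1: "unif_cont_on_l1 S f \<Longrightarrow> cont_on_l1 S f"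
  unfolding unif_cont_on_l1_def cont_on_l1_def by blast

lemma l1_dual_unif_cont:
  assumes "L \<in> l1_dual" "S \<subseteq> l1_space"
  shows "unif_cont_on_l1 S L"
  unfolding unif_cont_on_l1_def
proof (intro allI impI)
  fix e :: real assume "e > 0"
  obtain C where C: "C \<ge> 0" "\<forall>x\<in>l1_space. norm (L x) \<le> C * l1norm x"
    using l1_dual_bound[OF assms(1)] by blast
  have "norm (L y - L a) < e" if "a \<in> S" "y \<in> S" "l1norm (y - a) < e / (C + 1)" for a y
  proof -
    have ya: "y \<in> l1_space" "a \<in> l1_space"
      using that assms(2) by auto
    have "norm (L y - L a) = norm (L (y - a))"
      using l1_dual_diff[OF assms(1) ya] by simp
    also have "\<dots> \<le> C * l1norm (y - a)"
      using C(2) l1_space_diff[OF ya] by blast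
    also have "\<dots> \<le> (C + 1) * l1norm (y - a)"
      using that assms l1norm_nonneg[OF l1_space_diff] by (intro mult_right_mono) auto
    also have "\<dots> < e"
      using that C by (simp add: pos_less_divide_eq mult.commute)
    finally show ?thesis .
  qed
  with \<open>e > 0\<close> C(1) show "\<exists>d>0. \<forall>a\<in>S. \<forall>y\<in>S. l1norm (y - a) < d \<longrightarrow> norm (L y - L a) < e"
    by (intro exI[of _ "e / (C + 1)"]) auto
qed

text \<open>Elements of \<open>A_inf\<close> are normalised to vanish off the closed ball; \<open>A_inf_fun\<close> drops this
  normalisation, and \<open>cball_cut\<close> below restores it.\<close>

definition A_inf_fun :: "(l1 \<Rightarrow> complex) \<Rightarrow> bool" where
  "A_inf_fun F \<longleftrightarrow> (\<forall>a\<in>l1_ball. holo_at F a) \<and> cont_on_l1 l1_cball F \<and> (\<exists>C. \<forall>y\<in>l1_ball. norm (F y) \<le> C)"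

lemma A_inf_fun_const: "A_inf_fun (\<lambda>y. c)"
  unfolding A_inf_fun_def by (auto simp: holo_at_const cont_on_l1_const)

lemma A_inf_fun_add:
  assumes "A_inf_fun F" "A_inf_fun G"
  shows "A_inf_fun (\<lambda>y. F y + G y)"
proof -
  obtain C1 C2 where "\<forall>y\<in>l1_ball. norm (F y) \<le> C1" "\<forall>y\<in>l1_ball. norm (G y) \<le> C2"
    using assms unfolding A_inf_fun_def by blast
  then have "\<forall>y\<in>l1_ball. norm (F y + G y) \<le> C1 + C2"
    by (auto intro: norm_triangle_le add_mono)
  with assms show ?thesis
    unfolding A_inf_fun_def by (auto simp: holo_at_add cont_on_l1_add)
qed

lemma A_inf_fun_mult:
  assumes "A_inf_fun F" "A_inf_fun G"
  shows "A_inf_fun (\<lambda>y. F y * G y)"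
proof -
  obtain C1 C2 where "\<forall>y\<in>l1_ball. norm (F y) \<le> C1" "\<forall>y\<in>l1_ball. norm (G y) \<le> C2"
    using assms unfolding A_inf_fun_def by blast
  then have "\<forall>y\<in>l1_ball. norm (F y * G y) \<le> C1 * C2"
    by (auto simp: norm_mult intro: mult_mono order_trans[OF norm_ge_zero])
  with assms show ?thesis
    unfolding A_inf_fun_def by (auto simp: holo_at_mult cont_on_l1_mult)
qed

lemma A_inf_fun_cmult: "A_inf_fun F \<Longrightarrow> A_inf_fun (\<lambda>y. c * F y)"
  by (rule A_inf_fun_mult[OF A_inf_fun_const])

lemma A_inf_fun_power: "A_inf_fun F \<Longrightarrow> A_inf_fun (\<lambda>y. F y ^ k)"
  by (induction k) (auto intro: A_inf_fun_const A_inf_fun_mult)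

lemma A_inf_fun_dual:
  assumes "L \<in> l1_dual"
  shows "A_inf_fun L"
proof -
  obtain C where C: "C \<ge> 0" "\<forall>x\<in>l1_space. norm (L x) \<le> C * l1norm x"
    using l1_dual_bound[OF assms] by blast
  have "norm (L y) \<le> C" if "y \<in> l1_ball" for y
  proof -
    have "norm (L y) \<le> C * l1norm y"
      using C l1_ballD[OF that] by blast
    also have "\<dots> \<le> C"
      using C(1) l1_ballD[OF that] by (intro mult_left_le) auto
    finally show ?thesis .
  qed
  moreover have "cont_on_l1 l1_cball L"
    using assms by (intro unif_cont_imp_cont_on_l1 l1_dual_unif_cont) (auto simp: l1_cball_def)
  ultimately show ?thesis
    unfolding A_inf_fun_def using holo_at_dual[OF assms] l1_ballD by auto
qed

lemma A_inf_fun_inverse: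
  assumes "A_inf_fun F" "m > 0" "\<And>y. y \<in> l1_cball \<Longrightarrow> m \<le> norm (F y)"
  shows "A_inf_fun (\<lambda>y. 1 / F y)"
proof -
  have nonzero: "F y \<noteq> 0" if "y \<in> l1_cball" for y
    using assms(2) assms(3)[OF that] by auto
  have "norm (1 / F y) \<le> 1 / m" if "y \<in> l1_ball" for y
  proof -
    have "m \<le> norm (F y)"
      using assms(3) l1_ball_subset_cball that by blast
    then show ?thesis
      using le_imp_inverse_le[OF _ assms(2)] by (simp add: norm_divide norm_inverse divide_inverse)
  qed
  with assms nonzero l1_ball_subset_cball show ?thesis
    unfolding A_inf_fun_def by (auto intro!: holo_at_inverse cont_on_l1_inverse exI[of _ "1 / m"])
qed

lemma A_inf_fun_bounded_cball:
  assumes "A_inf_fun F"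
  shows "\<exists>C. \<forall>y\<in>l1_cball. norm (F y) \<le> C"
proof -
  obtain C where C: "\<forall>y\<in>l1_ball. norm (F y) \<le> C"
    using assms unfolding A_inf_fun_def by blast
  have "norm (F y) \<le> C + 1" if y: "y \<in> l1_cball" for y
  proof -
    obtain d where d: "d > 0" "\<forall>z\<in>l1_cball. l1norm (z - y) < d \<longrightarrow> norm (F z - F y) < 1"
      using assms y unfolding A_inf_fun_def cont_on_l1_def by (meson zero_less_one)
    then obtain z where "z \<in> l1_ball" "norm (F z - F y) < 1"
      using l1_cball_approx_by_ball[OF y d(1)] l1_ball_subset_cball by blast
    then show ?thesis
      using C norm_triangle_ineq2[of "F y" "F z"] by (auto simp: norm_minus_commute)
  qed
  then show ?thesis by blast
qed

definition cball_cut :: "(l1 \<Rightarrow> complex) \<Rightarrow> l1 \<Rightarrow> complex" where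
  "cball_cut F = (\<lambda>y. if y \<in> l1_cball then F y else 0)"

lemma cball_cut_in_A_inf:
  assumes "A_inf_fun F"
  shows "cball_cut F \<in> A_inf"
proof -
  have on_ball: "cball_cut F y = F y" if "y \<in> l1_ball" for y
    using that l1_ball_subset_cball by (auto simp: cball_cut_def)
  have "holo_at (cball_cut F) a" if "a \<in> l1_ball" for a
    using assms that on_ball unfolding A_inf_fun_def by (blast intro: holo_at_transfer)
  moreover have "cont_on_l1 l1_cball (cball_cut F)"
    using assms unfolding A_inf_fun_def cont_on_l1_def by (simp add: cball_cut_def)
  moreover have "\<exists>C. \<forall>y\<in>l1_ball. norm (cball_cut F y) \<le> C"
    using assms on_ball unfolding A_inf_fun_def by simp
  moreover have "\<forall>y. y \<notin> l1_cball \<longrightarrow> cball_cut F y = 0"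
    by (simp add: cball_cut_def)
  ultimately show ?thesis
    unfolding A_inf_def holo_on_ball_iff by blast
qed

lemma A_inf_imp_A_inf_fun: "f \<in> A_inf \<Longrightarrow> A_inf_fun f"
  unfolding A_inf_def A_inf_fun_def holo_on_ball_iff by blast

lemma cball_cut_A_inf: "f \<in> A_inf \<Longrightarrow> cball_cut f = f"
  unfolding A_inf_def cball_cut_def by auto

lemma cball_cut_cong: "(\<And>y. y \<in> l1_cball \<Longrightarrow> F y = G y) \<Longrightarrow> cball_cut F = cball_cut G"
  unfolding cball_cut_def by auto

lemma cball_cut_add: "cball_cut (\<lambda>y. F y + G y) = (\<lambda>y. cball_cut F y + cball_cut G y)"
  and cball_cut_mult: "cball_cut (\<lambda>y. F y * G y) = (\<lambda>y. cball_cut F y * cball_cut G y)"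
  and cball_cut_cmult: "cball_cut (\<lambda>y. c * F y) = (\<lambda>y. c * cball_cut F y)"
  unfolding cball_cut_def by auto

section \<open>Characters of \<open>A\<^sub>\<infinity>(B)\<close>\<close>

context
  fixes \<tau> :: "(l1 \<Rightarrow> complex) \<Rightarrow> complex"
  assumes \<tau>: "\<tau> \<in> spectrum_A_inf"
begin

lemma char_add:
  "A_inf_fun F \<Longrightarrow> A_inf_fun G \<Longrightarrow> \<tau> (cball_cut (\<lambda>y. F y + G y)) = \<tau> (cball_cut F) + \<tau> (cball_cut G)"
  using \<tau> cball_cut_in_A_inf unfolding cball_cut_add spectrum_A_inf_def by blast

lemma char_mult:
  "A_inf_fun F \<Longrightarrow> A_inf_fun G \<Longrightarrow> \<tau> (cball_cut (\<lambda>y. F y * G y)) = \<tau> (cball_cut F) * \<tau> (cball_cut G)"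
  using \<tau> cball_cut_in_A_inf unfolding cball_cut_mult spectrum_A_inf_def by blast

lemma char_cmult: "A_inf_fun F \<Longrightarrow> \<tau> (cball_cut (\<lambda>y. c * F y)) = c * \<tau> (cball_cut F)"
  using \<tau> cball_cut_in_A_inf unfolding cball_cut_cmult spectrum_A_inf_def by blast

lemma char_one: "\<tau> (cball_cut (\<lambda>y. 1)) = 1"
proof -
  obtain f where f: "f \<in> A_inf" "\<tau> f \<noteq> 0"
    using \<tau> unfolding spectrum_A_inf_def by blast
  have "\<tau> f = \<tau> f * \<tau> (cball_cut (\<lambda>y. 1))"
    using char_mult[OF A_inf_imp_A_inf_fun[OF f(1)] A_inf_fun_const, of 1]
    by (simp add: cball_cut_A_inf[OF f(1)])
  with f(2) show ?thesis by simp
qed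

lemma char_const: "\<tau> (cball_cut (\<lambda>y. c)) = c"
  using char_cmult[OF A_inf_fun_const, of c 1] char_one by simp

lemma char_power: "A_inf_fun F \<Longrightarrow> \<tau> (cball_cut (\<lambda>y. F y ^ k)) = \<tau> (cball_cut F) ^ k"
  by (induction k) (simp_all add: char_const char_mult A_inf_fun_power)

lemma char_inverse:
  assumes "A_inf_fun G" "m > 0" "\<And>y. y \<in> l1_cball \<Longrightarrow> m \<le> norm (G y)"
  shows "\<tau> (cball_cut G) * \<tau> (cball_cut (\<lambda>y. 1 / G y)) = 1"
proof -
  have "cball_cut (\<lambda>y. G y * (1 / G y)) = cball_cut (\<lambda>y. 1)"
    using assms(2,3) by (intro cball_cut_cong) (force simp: field_simps)
  then show ?thesis
    using char_mult[OF assms(1) A_inf_fun_inverse[OF assms]] char_one by simp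
qed

text \<open>Characters have norm one: if \<open>\<bar>\<tau>(F)\<bar>\<close> exceeded \<open>sup \<bar>F\<bar>\<close>, then
  \<open>\<tau>(F) - F\<close> would be invertible in \<open>A\<^sub>\<infinity>(B)\<close> but annihilated by \<open>\<tau>\<close>.\<close>

lemma char_norm_le:
  assumes "A_inf_fun F" "\<And>y. y \<in> l1_cball \<Longrightarrow> norm (F y) \<le> C"
  shows "norm (\<tau> (cball_cut F)) \<le> C"
proof (rule ccontr)
  define l where "l = \<tau> (cball_cut F)"
  assume "\<not> norm (\<tau> (cball_cut F)) \<le> C"
  then have m: "norm l - C > 0"
    by (simp add: l_def)
  define G where "G = (\<lambda>y. l + (- 1) * F y)"
  have G: "A_inf_fun G"
    unfolding G_def by (intro A_inf_fun_add A_inf_fun_const A_inf_fun_cmult assms(1))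
  have "norm l - C \<le> norm (G y)" if "y \<in> l1_cball" for y
    using norm_triangle_ineq2[of l "F y"] assms(2)[OF that] by (simp add: G_def)
  then have "\<tau> (cball_cut G) \<noteq> 0"
    using char_inverse[OF G m] by force
  moreover have "\<tau> (cball_cut G) = \<tau> (cball_cut (\<lambda>y. l)) + \<tau> (cball_cut (\<lambda>y. (- 1) * F y))"
    unfolding G_def by (rule char_add[OF A_inf_fun_const A_inf_fun_cmult[OF assms(1)]])
  then have "\<tau> (cball_cut G) = l + (- 1) * l"
    by (simp only: char_const char_cmult[OF assms(1)] l_def)
  ultimately show False by simp
qed

end

lemma fiber_char: "\<tau> \<in> fiber x \<Longrightarrow> \<tau> \<in> spectrum_A_inf"
  by (simp add: fiber_def)

inductive_set dual_poly :: "(l1 \<Rightarrow> complex) set" where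
  dual_poly_const: "(\<lambda>y. c) \<in> dual_poly"
| dual_poly_dual: "L \<in> l1_dual \<Longrightarrow> L \<in> dual_poly"
| dual_poly_add: "P \<in> dual_poly \<Longrightarrow> Q \<in> dual_poly \<Longrightarrow> (\<lambda>y. P y + Q y) \<in> dual_poly"
| dual_poly_mult: "P \<in> dual_poly \<Longrightarrow> Q \<in> dual_poly \<Longrightarrow> (\<lambda>y. P y * Q y) \<in> dual_poly"

lemma dual_poly_sum: "(\<And>i. i \<in> I \<Longrightarrow> P i \<in> dual_poly) \<Longrightarrow> (\<lambda>y. \<Sum>i\<in>I. P i y) \<in> dual_poly"
  by (induction I rule: infinite_finite_induct) (auto intro: dual_poly.intros)

lemma A_inf_fun_dual_poly: "P \<in> dual_poly \<Longrightarrow> A_inf_fun P"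
  by (induction rule: dual_poly.induct)
    (auto intro: A_inf_fun_const A_inf_fun_dual A_inf_fun_add A_inf_fun_mult)

lemma fiber_dual_poly:
  assumes "\<tau> \<in> fiber x" "P \<in> dual_poly"
  shows "\<tau> (cball_cut P) = P x"
  using assms(2)
proof (induction rule: dual_poly.induct)
  case (dual_poly_const c)
  show ?case using char_const[OF fiber_char[OF assms(1)]] .
next
  case (dual_poly_dual L)
  then show ?case using assms(1) by (simp add: fiber_def cball_cut_def)
next
  case (dual_poly_add P Q)
  then show ?case by (simp add: char_add[OF fiber_char[OF assms(1)]] A_inf_fun_dual_poly)
next
  case (dual_poly_mult P Q)
  then show ?case by (simp add: char_mult[OF fiber_char[OF assms(1)]] A_inf_fun_dual_poly)
qed

lemma norm_cnj_sgn_mult_le: "norm (cnj (sgn z) * w) \<le> norm w"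
  by (simp add: norm_mult norm_sgn)

lemma cnj_sgn_mult_self: "cnj (sgn z) * z = of_real (norm z)"
proof (cases "z = 0")
  case False
  then show ?thesis
    by (simp add: sgn_div_norm scaleR_conv_of_real field_simps complex_norm_square[symmetric] power2_eq_square)
qed simp

definition norming :: "l1 \<Rightarrow> l1 \<Rightarrow> complex" where
  "norming x y = (\<Sum>n. cnj (sgn (x n)) * y n)"

lemma summable_norming:
  assumes "y \<in> l1_space"
  shows "summable (\<lambda>n. norm (cnj (sgn (x n)) * y n))" "summable (\<lambda>n. cnj (sgn (x n)) * y n)"
proof -
  show *: "summable (\<lambda>n. norm (cnj (sgn (x n)) * y n))"
    by (rule summable_comparison_test'[where N = 0, OF l1_spaceD[OF assms]])
      (simp add: norm_cnj_sgn_mult_le)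
  show "summable (\<lambda>n. cnj (sgn (x n)) * y n)"
    using summable_norm_cancel[OF *] .
qed

lemma norm_norming_le:
  assumes "y \<in> l1_space"
  shows "norm (norming x y) \<le> l1norm y"
proof -
  have "norm (norming x y) \<le> (\<Sum>n. norm (cnj (sgn (x n)) * y n))"
    unfolding norming_def by (rule summable_norm[OF summable_norming(1)[OF assms]])
  also have "\<dots> \<le> l1norm y"
    unfolding l1norm_def using summable_norming(1)[OF assms] l1_spaceD[OF assms]
    by (intro suminf_le) (auto simp: norm_cnj_sgn_mult_le)
  finally show ?thesis .
qed

lemma Re_norming_le_1: "y \<in> l1_cball \<Longrightarrow> Re (norming x y) \<le> 1"
  using complex_Re_le_cmod[of "norming x y"] norm_norming_le[of y x] l1_cballD[of y] by linarith

lemma norming_dual: "norming x \<in> l1_dual"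
proof -
  have "norm (norming x y) \<le> 1 * l1norm y" if "y \<in> l1_space" for y
    using norm_norming_le[OF that] by simp
  moreover have "norming x (y + z) = norming x y + norming x z" if "y \<in> l1_space" "z \<in> l1_space" for y z
    unfolding norming_def using summable_norming(2)[OF that(1)] summable_norming(2)[OF that(2)]
    by (subst suminf_add) (simp_all add: algebra_simps)
  moreover have "norming x (scl c y) = c * norming x y" if "y \<in> l1_space" for c y
    unfolding norming_def scl_def using summable_norming(2)[OF that]
    by (subst suminf_mult[symmetric]) (simp_all add: algebra_simps)
  ultimately show ?thesis
    unfolding l1_dual_def by blast
qed

lemma norming_self: "x \<in> l1_space \<Longrightarrow> norming x x = of_real (l1norm x)"
  unfolding norming_def l1norm_def cnj_sgn_mult_self by (rule suminf_of_real[symmetric, OF l1_spaceD])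

text \<open>Each coordinate defect \<open>\<bar>y\<^sub>n\<bar> - Re (sgn x\<^sub>n* y\<^sub>n)\<close> is a nonnegative
  summand of \<open>\<parallel>y\<parallel> - Re (norming x y)\<close>.\<close>

lemma norming_coordinate_defect:
  assumes "y \<in> l1_cball"
  shows "norm (y n) - Re (cnj (sgn (x n)) * y n) \<le> 1 - Re (norming x y)"
proof -
  have y: "y \<in> l1_space" "l1norm y \<le> 1"
    using l1_cballD[OF assms] by auto
  have nonneg: "0 \<le> norm (y k) - Re (cnj (sgn (x k)) * y k)" for k
    using complex_Re_le_cmod[of "cnj (sgn (x k)) * y k"] norm_cnj_sgn_mult_le[of "x k" "y k"] by linarith
  have sRe: "summable (\<lambda>k. Re (cnj (sgn (x k)) * y k))"
    using summable_Re[OF summable_norming(2)[OF y(1)]] .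
  have "norm (y n) - Re (cnj (sgn (x n)) * y n) \<le> (\<Sum>k. norm (y k) - Re (cnj (sgn (x k)) * y k))"
    using sum_le_suminf[OF summable_diff[OF l1_spaceD[OF y(1)] sRe], of "{n}"] nonneg by simp
  also have "\<dots> = l1norm y - Re (norming x y)"
    unfolding l1norm_def norming_def Re_suminf[OF summable_norming(2)[OF y(1)]]
    by (rule suminf_diff[OF l1_spaceD[OF y(1)] sRe, symmetric])
  finally show ?thesis using y(2) by simp
qed

lemma l1norm_diff_le_coordinates:
  assumes y: "y \<in> l1_cball" and x: "x \<in> l1_sphere" and I: "finite I"
    and close: "\<And>n. n \<in> I \<Longrightarrow> norm (y n - x n) \<le> r"
  shows "l1norm (y - x) \<le> 2 * real (card I) * r + 2 * (1 - (\<Sum>n\<in>I. norm (x n)))"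
proof -
  have ys: "y \<in> l1_space" "l1norm y \<le> 1" and xs: "x \<in> l1_space" "l1norm x = 1"
    using l1_cballD[OF y] l1_sphereD[OF x] by auto
  have sy: "summable (\<lambda>n. norm (y n))" and sx: "summable (\<lambda>n. norm (x n))"
    using l1_spaceD ys(1) xs(1) by auto
  define gain where "gain n = (if n \<in> I then norm (y n) + norm (x n) - norm (y n - x n) else 0)" for n
  have gain_sum: "suminf gain = (\<Sum>n\<in>I. norm (y n) + norm (x n) - norm (y n - x n))"
    unfolding gain_def by (subst suminf_finite[OF I]) auto
  have summable_gain: "summable gain"
    unfolding gain_def by (intro summable_finite[OF I]) auto
  have "l1norm (y - x) \<le> (\<Sum>n. norm (y n) + norm (x n) - gain n)"
    unfolding l1norm_def using l1_spaceD[OF l1_space_diff[OF ys(1) xs(1)]] sy sx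
    by (intro suminf_le summable_diff summable_add summable_gain) (auto simp: gain_def norm_triangle_ineq4)
  also have "\<dots> = (\<Sum>n. norm (y n) + norm (x n)) - suminf gain"
    using sy sx summable_gain by (intro suminf_diff[symmetric] summable_add)
  also have "\<dots> = l1norm y + l1norm x - suminf gain"
    unfolding l1norm_def using sy sx by (simp add: suminf_add)
  finally have bound: "l1norm (y - x) \<le> l1norm y + l1norm x - suminf gain" .
  have "(\<Sum>n\<in>I. 2 * norm (x n) - 2 * r) \<le> suminf gain"
    unfolding gain_sum
  proof (rule sum_mono)
    fix n assume "n \<in> I"
    then show "2 * norm (x n) - 2 * r \<le> norm (y n) + norm (x n) - norm (y n - x n)"
      using close[of n] norm_triangle_ineq2[of "x n" "y n"] by (simp add: norm_minus_commute)
  qed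
  moreover have "(\<Sum>n\<in>I. 2 * norm (x n) - 2 * r) = 2 * (\<Sum>n\<in>I. norm (x n)) - 2 * real (card I) * r"
    by (simp add: sum_subtractf sum_distrib_left)
  ultimately show ?thesis
    using bound ys(2) xs(2) by argo
qed

lemma l1_sphere_coordinate_nhds:
  assumes x: "x \<in> l1_sphere" and e: "e > 0"
  obtains I r where "finite I" "r > 0" "\<And>n. n \<in> I \<Longrightarrow> x n \<noteq> 0"
    "\<And>y. y \<in> l1_cball \<Longrightarrow> (\<And>n. n \<in> I \<Longrightarrow> norm (y n - x n) \<le> r) \<Longrightarrow> l1norm (y - x) < e"
proof -
  have "(\<lambda>N. \<Sum>n<N. norm (x n)) \<longlonglongrightarrow> l1norm x"
    unfolding l1norm_def using l1_sphereD[OF x] by (intro summable_LIMSEQ l1_spaceD) auto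
  then have "eventually (\<lambda>N. 1 - e / 4 < (\<Sum>n<N. norm (x n))) sequentially"
    using l1_sphereD[OF x] e by (intro order_tendstoD(1)) auto
  then obtain N where N: "1 - e / 4 < (\<Sum>n<N. norm (x n))"
    unfolding eventually_sequentially by blast
  define I where "I = {n. n < N \<and> x n \<noteq> 0}"
  define r where "r = e / (8 * (real N + 1))"
  have I: "finite I" "real (card I) \<le> real N"
    unfolding I_def using card_mono[of "{..<N}" "{n. n < N \<and> x n \<noteq> 0}"] by auto
  have r: "r > 0" "2 * real N * r < e / 4"
    using e unfolding r_def by (simp_all add: field_simps)
  have "(\<Sum>n\<in>I. norm (x n)) = (\<Sum>n<N. norm (x n))"
    unfolding I_def by (rule sum.mono_neutral_cong_left) auto
  moreover have "2 * real (card I) * r \<le> 2 * real N * r"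
    using I(2) r(1) by simp
  ultimately have "2 * real (card I) * r + 2 * (1 - (\<Sum>n\<in>I. norm (x n))) < e"
    using N r(2) e by argo
  with l1norm_diff_le_coordinates[OF _ x I(1)] show ?thesis
    by (intro that[OF I(1) r(1)]) (auto simp: I_def intro: le_less_trans)
qed

section \<open>Peak functions at points of the unit sphere\<close>

lemma coordinate_dual: "(\<lambda>y. c * y n) \<in> l1_dual"
proof -
  have "\<forall>y\<in>l1_space. norm (c * y n) \<le> norm c * l1norm y"
    using norm_le_l1norm by (auto simp: norm_mult intro: mult_left_mono)
  then show ?thesis
    unfolding l1_dual_def scl_def by (auto simp: algebra_simps intro!: exI[of _ "norm c"])
qed

lemma Im_square_le_norm_minus_Re:
  assumes "norm u \<le> 1"
  shows "(Im u)\<^sup>2 \<le> 2 * (norm u - Re u)"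
proof -
  have "(Im u)\<^sup>2 = (norm u - Re u) * (norm u + Re u)"
    using cmod_power2[of u] by (simp add: power2_eq_square algebra_simps)
  also have "\<dots> \<le> (norm u - Re u) * 2"
    using complex_Re_le_cmod[of u] assms by (intro mult_left_mono) auto
  finally show ?thesis by simp
qed

text \<open>With \<open>u\<^sub>n = sgn x\<^sub>n* y\<^sub>n\<close>, the real part of \<open>1 - norming x y\<close> dominates the
  imaginary parts of all \<open>u\<^sub>n\<close>, so weighting it by \<open>2 |I| + 1\<close> makes the real part of
  \<open>peak_poly x I\<close> control the real parts of \<open>u\<^sub>n - \<bar>x\<^sub>n\<bar>\<close> as well.\<close>

definition peak_poly :: "l1 \<Rightarrow> nat set \<Rightarrow> l1 \<Rightarrow> complex" where
  "peak_poly x I y = of_nat (2 * card I + 1) * (1 - norming x y)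
     + (\<Sum>n\<in>I. (cnj (sgn (x n)) * y n - of_real (norm (x n)))\<^sup>2)"

lemma peak_poly_dual_poly: "peak_poly x I \<in> dual_poly"
proof -
  have "(\<lambda>y. cnj (sgn (x n)) * y n - of_real (norm (x n))) \<in> dual_poly" for n
    using dual_poly_add[OF dual_poly_dual[OF coordinate_dual[of "cnj (sgn (x n))" n]]
        dual_poly_const[of "- of_real (norm (x n))"]] by simp
  then have "(\<lambda>y. \<Sum>n\<in>I. (cnj (sgn (x n)) * y n - of_real (norm (x n)))\<^sup>2) \<in> dual_poly"
    unfolding power2_eq_square by (intro dual_poly_sum dual_poly_mult)
  moreover have "(\<lambda>y. of_nat (2 * card I + 1) * (1 - norming x y)) \<in> dual_poly"
    using dual_poly_mult[OF dual_poly_const[of "of_nat (2 * card I + 1)"]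
        dual_poly_add[OF dual_poly_const[of 1] dual_poly_mult[OF dual_poly_const[of "- 1"]
          dual_poly_dual[OF norming_dual[of x]]]]]
    by simp
  ultimately show ?thesis
    unfolding peak_poly_def[abs_def] by (rule dual_poly_add[rotated])
qed

lemma peak_poly_center: "x \<in> l1_sphere \<Longrightarrow> peak_poly x I x = 0"
  using l1_sphereD by (simp add: peak_poly_def norming_self cnj_sgn_mult_self)

lemma Im_cnj_sgn_mult_square_le:
  assumes "y \<in> l1_cball"
  shows "(Im (cnj (sgn (x n)) * y n))\<^sup>2 \<le> 2 * (1 - Re (norming x y))"
proof -
  define u where "u = cnj (sgn (x n)) * y n"
  have u_le: "norm u \<le> norm (y n)"
    unfolding u_def by (rule norm_cnj_sgn_mult_le)
  then have "norm u \<le> 1"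
    using norm_le_l1norm[of y n] l1_cballD[OF assms] by linarith
  then have "(Im u)\<^sup>2 \<le> 2 * (norm u - Re u)"
    by (rule Im_square_le_norm_minus_Re)
  also have "\<dots> \<le> 2 * (1 - Re (norming x y))"
    using norming_coordinate_defect[OF assms, of n x] u_le unfolding u_def by simp
  finally show ?thesis unfolding u_def .
qed

lemma peak_poly_Re_lower:
  assumes "y \<in> l1_cball"
  shows "1 - Re (norming x y) + (\<Sum>n\<in>I. (Re (cnj (sgn (x n)) * y n) - norm (x n))\<^sup>2)
           \<le> Re (peak_poly x I y)"
proof -
  define \<rho> where "\<rho> = 1 - Re (norming x y)"
  define u where "u n = cnj (sgn (x n)) * y n" for n
  have "(\<Sum>n\<in>I. (Re (u n) - norm (x n))\<^sup>2 - 2 * \<rho>) \<le> (\<Sum>n\<in>I. Re ((u n - of_real (norm (x n)))\<^sup>2))"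
  proof (rule sum_mono)
    fix n
    have "(Im (u n))\<^sup>2 \<le> 2 * \<rho>"
      unfolding u_def \<rho>_def by (rule Im_cnj_sgn_mult_square_le[OF assms])
    then show "(Re (u n) - norm (x n))\<^sup>2 - 2 * \<rho> \<le> Re ((u n - of_real (norm (x n)))\<^sup>2)"
      by (simp add: Re_power2)
  qed
  moreover have "Re (peak_poly x I y) = (2 * real (card I) + 1) * \<rho> + (\<Sum>n\<in>I. Re ((u n - of_real (norm (x n)))\<^sup>2))"
    unfolding peak_poly_def \<rho>_def u_def by simp
  ultimately show ?thesis
    unfolding \<rho>_def[symmetric] u_def[symmetric] by (simp add: sum_subtractf algebra_simps)
qed

lemma peak_poly_Re_nonneg: "y \<in> l1_cball \<Longrightarrow> 0 \<le> Re (peak_poly x I y)"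
  using peak_poly_Re_lower[of y x I] Re_norming_le_1[of y x]
    sum_nonneg[of I "\<lambda>n. (Re (cnj (sgn (x n)) * y n) - norm (x n))\<^sup>2"]
  by simp

lemma peak_poly_coordinate_bound:
  assumes "y \<in> l1_cball" "finite I" "n \<in> I" "x n \<noteq> 0"
  shows "(norm (y n - x n))\<^sup>2 \<le> 3 * Re (peak_poly x I y)"
proof -
  define u where "u = cnj (sgn (x n)) * y n"
  define \<rho> where "\<rho> = 1 - Re (norming x y)"
  have "u - of_real (norm (x n)) = cnj (sgn (x n)) * (y n - x n)"
    unfolding u_def using cnj_sgn_mult_self[of "x n"] by (simp add: algebra_simps)
  then have "norm (y n - x n) = norm (u - of_real (norm (x n)))"
    using assms(4) by (simp add: norm_mult norm_sgn)
  then have "(norm (y n - x n))\<^sup>2 = (Re u - norm (x n))\<^sup>2 + (Im u)\<^sup>2"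
    by (simp add: cmod_power2)
  moreover have "(Re u - norm (x n))\<^sup>2 \<le> (\<Sum>k\<in>I. (Re (cnj (sgn (x k)) * y k) - norm (x k))\<^sup>2)"
    unfolding u_def by (rule member_le_sum[OF assms(3)]) (simp_all add: assms(2))
  then have "\<rho> + (Re u - norm (x n))\<^sup>2 \<le> Re (peak_poly x I y)"
    using peak_poly_Re_lower[OF assms(1), of x I] unfolding \<rho>_def by linarith
  moreover have "(Im u)\<^sup>2 \<le> 2 * \<rho>"
    unfolding u_def \<rho>_def by (rule Im_cnj_sgn_mult_square_le[OF assms(1)])
  moreover have "0 \<le> \<rho>"
    using Re_norming_le_1[OF assms(1)] by (simp add: \<rho>_def)
  moreover have "0 \<le> (Re u - norm (x n))\<^sup>2"
    by simp
  ultimately show ?thesis by linarith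
qed

lemma sphere_peak_poly:
  assumes x: "x \<in> l1_sphere" and \<delta>: "\<delta> > 0"
  obtains Q c where "Q \<in> dual_poly" "Q x = 0" "c > 0" "\<And>y. y \<in> l1_cball \<Longrightarrow> 0 \<le> Re (Q y)"
    "\<And>y. y \<in> l1_cball \<Longrightarrow> \<delta> \<le> l1norm (y - x) \<Longrightarrow> c \<le> Re (Q y)"
proof -
  obtain I r where I: "finite I" "r > 0" "\<And>n. n \<in> I \<Longrightarrow> x n \<noteq> 0"
    and near: "\<And>y. y \<in> l1_cball \<Longrightarrow> (\<And>n. n \<in> I \<Longrightarrow> norm (y n - x n) \<le> r) \<Longrightarrow> l1norm (y - x) < \<delta>"
    using l1_sphere_coordinate_nhds[OF x \<delta>] by blast
  have "r\<^sup>2 / 3 \<le> Re (peak_poly x I y)" if y: "y \<in> l1_cball" "\<delta> \<le> l1norm (y - x)" for y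
  proof (rule ccontr)
    assume "\<not> r\<^sup>2 / 3 \<le> Re (peak_poly x I y)"
    then have "(norm (y n - x n))\<^sup>2 \<le> r\<^sup>2" if "n \<in> I" for n
      using peak_poly_coordinate_bound[of y I n x] y(1) I(1) that I(3)[OF that] by linarith
    then have "norm (y n - x n) \<le> r" if "n \<in> I" for n
      using I(2) that by (simp add: abs_le_square_iff[symmetric])
    with near[OF y(1)] y(2) show False by fastforce
  qed
  then show ?thesis
    using I(2) peak_poly_Re_nonneg
    by (intro that[OF peak_poly_dual_poly peak_poly_center[OF x], of "r\<^sup>2 / 3"]) auto
qed

lemma fiber_peak_function:
  assumes x: "x \<in> l1_sphere" and \<delta>: "\<delta> > 0"
  obtains h q where "A_inf_fun h" "0 \<le> q" "q < 1" "\<And>\<tau>. \<tau> \<in> fiber x \<Longrightarrow> \<tau> (cball_cut h) = 1"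
    "\<And>y. y \<in> l1_cball \<Longrightarrow> norm (h y) \<le> 1"
    "\<And>y. y \<in> l1_cball \<Longrightarrow> \<delta> \<le> l1norm (y - x) \<Longrightarrow> norm (h y) \<le> q"
proof -
  obtain Q c where Q: "Q \<in> dual_poly" "Q x = 0" "c > 0" "\<And>y. y \<in> l1_cball \<Longrightarrow> 0 \<le> Re (Q y)"
    and far: "\<And>y. y \<in> l1_cball \<Longrightarrow> \<delta> \<le> l1norm (y - x) \<Longrightarrow> c \<le> Re (Q y)"
    using sphere_peak_poly[OF x \<delta>] by blast
  define P where "P y = 1 + Q y" for y
  have P: "P \<in> dual_poly"
    unfolding P_def[abs_def] by (intro dual_poly_add dual_poly_const Q(1))
  have P_ge: "1 + c \<le> norm (P y)" if "y \<in> l1_cball" "\<delta> \<le> l1norm (y - x)" for y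
    using far[OF that] complex_Re_le_cmod[of "P y"] by (simp add: P_def)
  have P_ge_1: "1 \<le> norm (P y)" if "y \<in> l1_cball" for y
    using Q(4)[OF that] complex_Re_le_cmod[of "P y"] by (simp add: P_def)
  have "\<tau> (cball_cut (\<lambda>y. 1 / P y)) = 1" if "\<tau> \<in> fiber x" for \<tau>
  proof -
    have "\<tau> (cball_cut P) = 1"
      using fiber_dual_poly[OF that P] Q(2) by (simp add: P_def)
    then show ?thesis
      using char_inverse[OF fiber_char[OF that] A_inf_fun_dual_poly[OF P] zero_less_one P_ge_1] by simp
  qed
  moreover have "norm (1 / P y) \<le> 1" if "y \<in> l1_cball" for y
    using P_ge_1[OF that] by (simp add: norm_divide divide_le_eq_1)
  moreover have "norm (1 / P y) \<le> 1 / (1 + c)" if "y \<in> l1_cball" "\<delta> \<le> l1norm (y - x)" for y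
    using le_imp_inverse_le[OF P_ge[OF that]] Q(3) by (simp add: norm_divide norm_inverse divide_inverse)
  ultimately show ?thesis
    using Q(3) A_inf_fun_inverse[OF A_inf_fun_dual_poly[OF P] zero_less_one P_ge_1]
    by (intro that[of "\<lambda>y. 1 / P y" "1 / (1 + c)"]) auto
qed

lemma damping_by_power:
  fixes g h :: "'a \<Rightarrow> 'b::real_normed_div_algebra"
  assumes q: "0 \<le> q" "q < 1" and "\<epsilon> > 0" "0 \<le> e"
    and g_bound: "\<And>y. y \<in> S \<Longrightarrow> norm (g y) \<le> C" and g_small: "\<And>y. y \<in> S \<Longrightarrow> y \<in> U \<Longrightarrow> norm (g y) \<le> e"
    and h_le_1: "\<And>y. y \<in> S \<Longrightarrow> norm (h y) \<le> 1" and h_far: "\<And>y. y \<in> S \<Longrightarrow> y \<notin> U \<Longrightarrow> norm (h y) \<le> q"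
  obtains k where "\<And>y. y \<in> S \<Longrightarrow> norm (g y * h y ^ k) \<le> e + \<epsilon>"
proof -
  define C' where "C' = max 0 C"
  obtain k where "q ^ k < \<epsilon> / (C' + 1)"
    using real_arch_pow_inv[of "\<epsilon> / (C' + 1)" q] \<open>\<epsilon> > 0\<close> q by (auto simp: C'_def)
  then have "(C' + 1) * q ^ k < \<epsilon>"
    by (simp add: C'_def pos_less_divide_eq mult.commute)
  moreover have "C' * q ^ k \<le> (C' + 1) * q ^ k"
    using q by (intro mult_right_mono) auto
  ultimately have k: "C' * q ^ k \<le> \<epsilon>"
    by linarith
  have "norm (g y * h y ^ k) \<le> e + \<epsilon>" if y: "y \<in> S" for y
  proof (cases "y \<in> U")
    case True
    have "norm (g y) * norm (h y) ^ k \<le> e * 1"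
      using g_small[OF y True] h_le_1[OF y] \<open>0 \<le> e\<close> by (intro mult_mono power_le_one) auto
    then show ?thesis
      using \<open>\<epsilon> > 0\<close> by (simp add: norm_mult norm_power)
  next
    case False
    have "norm (g y) * norm (h y) ^ k \<le> C' * q ^ k"
      using g_bound[OF y] h_far[OF y False] q by (intro mult_mono power_mono) (auto simp: C'_def)
    with k \<open>0 \<le> e\<close> show ?thesis by (simp add: norm_mult norm_power)
  qed
  then show ?thesis by (rule that)
qed

text \<open>A character in the fibre over a sphere point \<open>x\<close> only sees the values of a function near
  \<open>x\<close>: multiplying by a high power of a peak function at \<open>x\<close> does not change its value.\<close>

lemma fiber_localization:
  assumes x: "x \<in> l1_sphere" and \<tau>: "\<tau> \<in> fiber x" and g: "A_inf_fun g"
    and d: "d > 0" and small: "\<And>y. y \<in> l1_cball \<Longrightarrow> l1norm (y - x) < d \<Longrightarrow> norm (g y) \<le> e"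
  shows "norm (\<tau> (cball_cut g)) \<le> e"
proof (rule field_le_epsilon)
  fix \<epsilon> :: real assume "\<epsilon> > 0"
  obtain h q where h: "A_inf_fun h" "0 \<le> q" "q < 1" "\<tau> (cball_cut h) = 1"
    "\<And>y. y \<in> l1_cball \<Longrightarrow> norm (h y) \<le> 1" "\<And>y. y \<in> l1_cball \<Longrightarrow> d \<le> l1norm (y - x) \<Longrightarrow> norm (h y) \<le> q"
    using fiber_peak_function[OF x d] \<tau> by metis
  obtain C where C: "\<And>y. y \<in> l1_cball \<Longrightarrow> norm (g y) \<le> C"
    using A_inf_fun_bounded_cball[OF g] by blast
  have "0 \<le> e"
    using order_trans[OF norm_ge_zero small[of x]] x l1_sphere_subset_cball d by auto
  then obtain k where bound: "\<And>y. y \<in> l1_cball \<Longrightarrow> norm (g y * h y ^ k) \<le> e + \<epsilon>"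
  proof (rule damping_by_power[where U = "{y. l1norm (y - x) < d}", OF h(2,3) \<open>\<epsilon> > 0\<close> _ C])
    show "norm (g y) \<le> e" if "y \<in> l1_cball" "y \<in> {y. l1norm (y - x) < d}" for y
      using small that by simp
    show "norm (h y) \<le> q" if "y \<in> l1_cball" "y \<notin> {y. l1norm (y - x) < d}" for y
      using h(6) that by simp
  qed (use h(5) that in auto)
  have "\<tau> (cball_cut (\<lambda>y. g y * h y ^ k)) = \<tau> (cball_cut g)"
    using char_mult[OF fiber_char[OF \<tau>] g A_inf_fun_power[OF h(1)]]
      char_power[OF fiber_char[OF \<tau>] h(1)] h(4) by simp
  with char_norm_le[OF fiber_char[OF \<tau>] A_inf_fun_mult[OF g A_inf_fun_power[OF h(1)]] bound]
  show "norm (\<tau> (cball_cut g)) \<le> e + \<epsilon>"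
    by simp
qed

section \<open>The fibres over a point of the unit sphere\<close>

lemma fiber_eq_point_evaluation:
  assumes x: "x \<in> l1_sphere" and \<tau>: "\<tau> \<in> fiber x" and f: "f \<in> A_inf"
  shows "\<tau> f = f x"
proof -
  define g where "g y = f y + (- f x)" for y
  have g: "A_inf_fun g"
    unfolding g_def[abs_def] by (intro A_inf_fun_add A_inf_imp_A_inf_fun[OF f] A_inf_fun_const)
  have "\<tau> (cball_cut g) = \<tau> f - f x"
    using char_add[OF fiber_char[OF \<tau>] A_inf_imp_A_inf_fun[OF f] A_inf_fun_const[of "- f x"]]
    by (simp add: g_def[abs_def] char_const[OF fiber_char[OF \<tau>]] cball_cut_A_inf[OF f])
  moreover have "norm (\<tau> (cball_cut g)) \<le> e" if "e > 0" for e
  proof -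
    have "cont_on_l1 l1_cball f" "x \<in> l1_cball"
      using f x l1_sphere_subset_cball unfolding A_inf_def by auto
    then obtain d where "d > 0" and d: "\<forall>y\<in>l1_cball. l1norm (y - x) < d \<longrightarrow> norm (f y - f x) < e"
      using \<open>e > 0\<close> unfolding cont_on_l1_def by blast
    show ?thesis
    proof (rule fiber_localization[OF x \<tau> g \<open>d > 0\<close>])
      fix y assume "y \<in> l1_cball" "l1norm (y - x) < d"
      then have "norm (f y - f x) < e" using d by blast
      then show "norm (g y) \<le> e" by (simp add: g_def)
    qed
  qed
  ultimately have "norm (\<tau> f - f x) \<le> 0"
    using field_le_epsilon[of "norm (\<tau> f - f x)" 0] by simp
  then show ?thesis by simp
qed

lemma point_evaluation_spectrum:
  assumes "y \<in> l1_cball"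
  shows "(\<lambda>g. g y) \<in> spectrum_A_inf"
proof -
  have "A_inf_one \<in> A_inf"
    using cball_cut_in_A_inf[OF A_inf_fun_const[of 1]] by (simp add: A_inf_one_def cball_cut_def)
  moreover have "A_inf_one y \<noteq> 0"
    using assms by (simp add: A_inf_one_def)
  ultimately show ?thesis
    unfolding spectrum_A_inf_def by blast
qed

lemma point_evaluation_fiber: "x \<in> l1_cball \<Longrightarrow> (\<lambda>g. g x) \<in> fiber x"
  by (simp add: fiber_def point_evaluation_spectrum)

lemma l1_within_mono: "S \<subseteq> T \<Longrightarrow> l1_within a S \<le> l1_within a T"
  by (rule filter_leI) (auto simp: eventually_l1_within)

lemma l1_within_ball_nontrivial: "x \<in> l1_cball \<Longrightarrow> l1_within x l1_ball \<noteq> bot"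
  unfolding eventually_False[symmetric] eventually_l1_within using l1_cball_approx_by_ball by blast

lemma uc_ext_eqI:
  assumes x: "x \<in> l1_cball" and lim: "(g \<longlongrightarrow> v) (l1_within x l1_ball)"
  shows "uc_ext g x = v"
proof -
  have iff: "(\<forall>e>0. \<exists>d>0. \<forall>y\<in>l1_ball. l1norm (y - x) < d \<longrightarrow> norm (g y - w) < e)
      \<longleftrightarrow> (g \<longlongrightarrow> w) (l1_within x l1_ball)" for w
    by (simp add: tendsto_iff eventually_l1_within dist_norm)
  show ?thesis
    unfolding uc_ext_def iff
    using lim tendsto_unique[OF l1_within_ball_nontrivial[OF x] lim] by blast
qed

lemma l1_dual_tendsto_within_ball:
  assumes "L \<in> l1_dual" "x \<in> l1_space"
  shows "(L \<longlongrightarrow> L x) (l1_within x l1_ball)"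
proof -
  have "cont_on_l1 l1_space L"
    by (rule unif_cont_imp_cont_on_l1[OF l1_dual_unif_cont[OF assms(1) order_refl]])
  with assms(2) have "(L \<longlongrightarrow> L x) (l1_within x l1_space)"
    unfolding cont_on_l1_iff_tendsto by blast
  then show ?thesis
    by (rule tendsto_mono[rotated]) (auto intro: l1_within_mono dest: l1_ballD)
qed

lemma l1_dual_A_u: "L \<in> l1_dual \<Longrightarrow> L \<in> A_u"
  unfolding A_u_def holo_on_ball_iff
  by (auto intro: holo_at_dual l1_dual_unif_cont dest: l1_ballD)

lemma A_u_rep_dual:
  assumes "L \<in> l1_dual"
  shows "A_u_rep L = cball_cut L"
proof
  fix y
  show "A_u_rep L y = cball_cut L y"
  proof (cases "y \<in> l1_cball")
    case True
    then show ?thesis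
      using uc_ext_eqI[OF True l1_dual_tendsto_within_ball[OF assms]] l1_cballD[OF True]
      by (simp add: A_u_rep_def cball_cut_def)
  qed (simp add: A_u_rep_def cball_cut_def)
qed

lemma point_evaluation_fiber_P: "x \<in> l1_cball \<Longrightarrow> (\<lambda>g. g x) \<in> fiber_P x"
  by (simp add: fiber_P_def A_u_rep_def point_evaluation_spectrum)

lemma fiber_P_subset_fiber:
  assumes "x \<in> l1_cball"
  shows "fiber_P x \<subseteq> fiber x"
proof
  fix \<tau> assume \<tau>: "\<tau> \<in> fiber_P x"
  have "\<tau> (cball_cut L) = L x" if "L \<in> l1_dual" for L
    using \<tau> l1_dual_A_u[OF that] A_u_rep_dual[OF that]
      uc_ext_eqI[OF assms l1_dual_tendsto_within_ball[OF that l1_cballD[OF assms, THEN conjunct1]]]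
    unfolding fiber_P_def by auto
  with \<tau> show "\<tau> \<in> fiber x"
    unfolding fiber_P_def fiber_def cball_cut_def by auto
qed

lemma gelfand_image_fiber:
  assumes "x \<in> l1_sphere" "f \<in> A_inf"
  shows "gelfand f ` fiber x = {f x}" "gelfand f ` fiber_P x = {f x}"
proof -
  have x: "x \<in> l1_cball"
    using assms(1) l1_sphere_subset_cball by blast
  have "\<tau> f = f x" if "\<tau> \<in> fiber_P x \<or> \<tau> \<in> fiber x" for \<tau>
    using that fiber_P_subset_fiber[OF x] fiber_eq_point_evaluation[OF assms(1) _ assms(2)] by blast
  moreover have "f x \<in> gelfand f ` fiber x" "f x \<in> gelfand f ` fiber_P x"
    using point_evaluation_fiber[OF x] point_evaluation_fiber_P[OF x] unfolding gelfand_def by force+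
  ultimately show "gelfand f ` fiber x = {f x}" "gelfand f ` fiber_P x = {f x}"
    unfolding gelfand_def by blast+
qed

lemma multilin_homogeneous:
  assumes A: "multilin_l1 k A" and x: "x \<in> l1_space"
  shows "A (replicate k (scl c x)) = c ^ k * A (replicate k x)"
proof -
  define xs where "xs j = map (\<lambda>i. if i < j then scl c x else x) [0..<k]" for j
  have "A (xs j) = c ^ j * A (xs 0)" if "j \<le> k" for j
    using that
  proof (induction j)
    case (Suc j)
    have "(xs j)[j := scl c x] = xs (Suc j)" "(xs j)[j := x] = xs j"
      using Suc.prems unfolding xs_def by (auto intro!: nth_equalityI simp: nth_list_update)
    moreover have "length (xs j) = k" "set (xs j) \<subseteq> l1_space"
      using x l1_space_scl[OF x] unfolding xs_def by auto
    ultimately have "A (xs (Suc j)) = c * A (xs j)"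
      using A x Suc.prems unfolding multilin_l1_def by (metis Suc_le_lessD)
    with Suc show ?case by simp
  qed simp
  moreover have "xs 0 = replicate k x" "xs k = replicate k (scl c x)"
    unfolding xs_def by (auto simp: map_replicate_const intro!: nth_equalityI)
  ultimately show ?thesis by (metis order_refl)
qed

lemma coordinate_poly: "(\<lambda>y. y n) \<in> poly_l1"
proof -
  define As :: "nat \<Rightarrow> l1 list \<Rightarrow> complex"
    where "As k = (if k = 0 then (\<lambda>_. 0) else (\<lambda>xs. hd xs n))" for k
  have "multilin_l1 1 (As 1)"
    unfolding multilin_l1_def As_def
    by (auto simp: length_Suc_conv scl_def norm_le_l1norm intro!: exI[of _ 1])
  moreover have "multilin_l1 0 (As 0)"
    unfolding multilin_l1_def As_def by auto
  ultimately have "\<forall>k\<le>1. multilin_l1 k (As k)"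
    by (auto simp: le_Suc_eq)
  moreover have "\<forall>x\<in>l1_space. x n = (\<Sum>k\<le>1. As k (replicate k x))"
    by (simp add: As_def)
  ultimately show ?thesis
    unfolding poly_l1_def by blast
qed

section \<open>Cluster sets at a point of the unit sphere\<close>

lemma coordinatewise_tendsto_sphere:
  assumes x: "x \<in> l1_sphere" and ball: "eventually (\<lambda>y. y \<in> l1_ball) F"
    and coords: "\<And>n. ((\<lambda>y. y n) \<longlongrightarrow> x n) F" and e: "e > 0"
  shows "eventually (\<lambda>y. l1norm (y - x) < e) F"
proof -
  obtain I r where I: "finite I" "r > 0" and "\<And>n. n \<in> I \<Longrightarrow> x n \<noteq> 0"
    and near: "\<And>y. y \<in> l1_cball \<Longrightarrow> (\<And>n. n \<in> I \<Longrightarrow> norm (y n - x n) \<le> r) \<Longrightarrow> l1norm (y - x) < e"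
    using l1_sphere_coordinate_nhds[OF x e] by blast
  have "eventually (\<lambda>y. \<forall>n\<in>I. dist (y n) (x n) < r) F"
    using I coords by (intro eventually_ball_finite) (auto intro: tendstoD)
  with ball show ?thesis
  proof eventually_elim
    case (elim y)
    then have "y \<in> l1_cball"
      using l1_ball_subset_cball by blast
    then show ?case
      by (rule near) (use elim in \<open>auto simp: dist_norm\<close>)
  qed
qed

lemma A_inf_tendsto_sphere:
  assumes x: "x \<in> l1_sphere" and f: "f \<in> A_inf" and ball: "eventually (\<lambda>y. y \<in> l1_ball) F"
    and coords: "\<And>n. ((\<lambda>y. y n) \<longlongrightarrow> x n) F"
  shows "(f \<longlongrightarrow> f x) F"
proof (rule tendstoI)
  fix e :: real assume "e > 0"
  have "cont_on_l1 l1_cball f" "x \<in> l1_cball"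
    using f x l1_sphere_subset_cball unfolding A_inf_def by auto
  then obtain d where "d > 0" and d: "\<forall>y\<in>l1_cball. l1norm (y - x) < d \<longrightarrow> norm (f y - f x) < e"
    using \<open>e > 0\<close> unfolding cont_on_l1_def by blast
  from ball coordinatewise_tendsto_sphere[OF x ball coords \<open>d > 0\<close>]
  show "eventually (\<lambda>y. dist (f y) (f x) < e) F"
  proof eventually_elim
    case (elim y)
    then show ?case
      using d l1_ball_subset_cball by (auto simp: dist_norm)
  qed
qed

lemma cluster_set_subset:
  assumes x: "x \<in> l1_sphere" and f: "f \<in> A_inf"
  shows "cluster_set f x \<subseteq> {f x}"
proof
  fix v assume "v \<in> cluster_set f x"
  then obtain F where F: "F \<noteq> bot" "eventually (\<lambda>y. y \<in> l1_ball) F"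
    "\<forall>L\<in>l1_dual. (L \<longlongrightarrow> L x) F" "(f \<longlongrightarrow> v) F"
    unfolding cluster_set_def by blast
  have "((\<lambda>y. y n) \<longlongrightarrow> x n) F" for n
    using bspec[OF F(3) coordinate_dual[of 1 n]] by simp
  then have "(f \<longlongrightarrow> f x) F"
    by (rule A_inf_tendsto_sphere[OF x f F(2)])
  then show "v \<in> {f x}"
    using tendsto_unique[OF F(1) F(4)] by simp
qed

lemma cluster_set_P_subset:
  assumes x: "x \<in> l1_sphere" and f: "f \<in> A_inf"
  shows "cluster_set_P f x \<subseteq> {f x}"
proof
  fix v assume "v \<in> cluster_set_P f x"
  then obtain F where F: "F \<noteq> bot" "eventually (\<lambda>y. y \<in> l1_ball) F"
    "\<forall>P\<in>poly_l1. (P \<longlongrightarrow> P x) F" "(f \<longlongrightarrow> v) F"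
    unfolding cluster_set_P_def by blast
  have "((\<lambda>y. y n) \<longlongrightarrow> x n) F" for n
    using bspec[OF F(3) coordinate_poly[of n]] by simp
  then have "(f \<longlongrightarrow> f x) F"
    by (rule A_inf_tendsto_sphere[OF x f F(2)])
  then show "v \<in> {f x}"
    using tendsto_unique[OF F(1) F(4)] by simp
qed

lemma radial_filterlim:
  assumes x: "x \<in> l1_cball"
  shows "filterlim (\<lambda>t. scl (of_real t) x) (l1_within x l1_cball) (at_left 1)"
  unfolding filterlim_def le_filter_def eventually_filtermap eventually_l1_within
proof safe
  fix P d assume "d > (0::real)" and P: "\<forall>y\<in>l1_cball. l1norm (y - x) < d \<longrightarrow> P y"
  then have "eventually (\<lambda>t. t \<in> {max 0 (1 - d)<..<1}) (at_left (1::real))"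
    by (intro eventually_at_left_real) auto
  then show "eventually (\<lambda>t. P (scl (of_real t) x)) (at_left 1)"
  proof (rule eventually_mono)
    fix t assume t: "t \<in> {max 0 (1 - d)<..<1}"
    then have "scl (of_real t) x \<in> l1_cball"
      using radial_in_ball[OF x] l1_ball_subset_cball by auto
    moreover have "l1norm (scl (of_real t) x - x) < d"
    proof -
      have "l1norm (scl (of_real t) x - x) = (1 - t) * l1norm x"
        using t l1_cballD[OF x] radial_dist[of x t] by simp
      moreover have "(1 - t) * l1norm x \<le> 1 - t"
        using t l1_cballD[OF x] by (intro mult_left_le) auto
      moreover have "1 - d < t"
        using t by simp
      ultimately show ?thesis
        by linarith
    qed
    ultimately show "P (scl (of_real t) x)"
      using P by blast
  qed
qed

lemma poly_l1_radial_tendsto: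
  assumes P: "P \<in> poly_l1" and x: "x \<in> l1_space"
  shows "((\<lambda>t. P (scl (of_real t) x)) \<longlongrightarrow> P x) (at_left 1)"
proof -
  obtain N As where As: "\<forall>k\<le>N. multilin_l1 k (As k)" "\<forall>y\<in>l1_space. P y = (\<Sum>k\<le>N. As k (replicate k y))"
    using P unfolding poly_l1_def by blast
  have "P (scl (of_real t) x) = (\<Sum>k\<le>N. of_real t ^ k * As k (replicate k x))" for t
    using As l1_space_scl[OF x] multilin_homogeneous[OF _ x] by simp
  moreover have "((\<lambda>t. \<Sum>k\<le>N. of_real t ^ k * As k (replicate k x))
      \<longlongrightarrow> (\<Sum>k\<le>N. of_real 1 ^ k * As k (replicate k x))) (at_left (1::real))"
    by (intro tendsto_intros tendsto_ident_at)
  ultimately show ?thesis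
    using As(2) x by simp
qed

lemma radial_approach:
  assumes x: "x \<in> l1_sphere"
  defines "F \<equiv> filtermap (\<lambda>t. scl (of_real t) x) (at_left (1::real))"
  shows "F \<noteq> bot" "eventually (\<lambda>y. y \<in> l1_ball) F"
    and "f \<in> A_inf \<Longrightarrow> (f \<longlongrightarrow> f x) F"
    and "L \<in> l1_dual \<Longrightarrow> (L \<longlongrightarrow> L x) F"
    and "P \<in> poly_l1 \<Longrightarrow> (P \<longlongrightarrow> P x) F"
proof -
  have xs: "x \<in> l1_space" and xc: "x \<in> l1_cball"
    using l1_sphereD[OF x] l1_sphere_subset_cball x by auto
  show "F \<noteq> bot"
    unfolding F_def by (simp add: filtermap_bot_iff)
  show "eventually (\<lambda>y. y \<in> l1_ball) F"
    unfolding F_def eventually_filtermap using eventually_at_left_real[of 0 "1::real"]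
    by (rule eventually_mono) (auto intro: radial_in_ball[OF xc])
  show "(f \<longlongrightarrow> f x) F" if "f \<in> A_inf"
  proof -
    have "(f \<longlongrightarrow> f x) (l1_within x l1_cball)"
      using that xc unfolding A_inf_def cont_on_l1_iff_tendsto by blast
    with radial_filterlim[OF xc] show ?thesis
      unfolding F_def filterlim_filtermap by (rule filterlim_compose[rotated])
  qed
  show "(L \<longlongrightarrow> L x) F" if "L \<in> l1_dual"
  proof -
    have "((\<lambda>t. of_real t * L x) \<longlongrightarrow> of_real 1 * L x) (at_left (1::real))"
      by (intro tendsto_intros tendsto_ident_at)
    then show ?thesis
      unfolding F_def filterlim_filtermap using l1_dual_scl[OF that xs] by simp
  qed
  show "(P \<longlongrightarrow> P x) F" if "P \<in> poly_l1"
    using poly_l1_radial_tendsto[OF that xs] unfolding F_def filterlim_filtermap by simp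
qed

lemma cluster_sets_sphere:
  assumes "x \<in> l1_sphere" "f \<in> A_inf"
  shows "cluster_set f x = {f x}" "cluster_set_P f x = {f x}"
proof -
  note radial = radial_approach[OF assms(1)]
  have "f x \<in> cluster_set f x"
    unfolding cluster_set_def using radial(1,2) radial(3)[OF assms(2)] radial(4) by blast
  moreover have "f x \<in> cluster_set_P f x"
    unfolding cluster_set_P_def using radial(1,2) radial(3)[OF assms(2)] radial(5) by blast
  ultimately show "cluster_set f x = {f x}" "cluster_set_P f x = {f x}"
    using cluster_set_subset[OF assms] cluster_set_P_subset[OF assms] by auto
qed

theorem mainTheorem13:
  assumes "x \<in> l1_sphere"
  shows "\<forall>f\<in>A_inf. cluster_set f x = gelfand f ` fiber x
                 \<and> cluster_set_P f x = gelfand f ` fiber_P x"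
  using cluster_sets_sphere[OF assms] gelfand_image_fiber[OF assms] by simp

end
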